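(* Let $\mathbb W=(W,I,\preccurlyeq,\circ,{}^\sim,{}^-,{}^\neg)$ be a DqRA-frame. For upsets $U$ of $(W,\preccurlyeq)$ define ${\sim}U=\{w\mid w^-\notin U\}$, $-U=\{w\mid w^\sim\notin U\}$, and $\neg U=\{x\in W\mid x^\neg\notin U\}$. Then $\mathbb W^+=(\mathsf{Up}(W,\preccurlyeq),\cap,\cup,\circ,I,\sim,-,\neg)$ is a distributive quasi relation algebra (DqRA).
   Context: For a set $W$ and $\circ:W\times W\to\mathcal P(W)$, $U\circ V=\bigcup\{a\circ b\mid a\in U,b\in V\}$, $x\circ V=\{x\}\circ V$, $U\circ y=U\circ\{y\}$; superscripts compose left to right, e.g. $x^{\sim\neg}=(x^\sim)^\neg$. $\mathsf{Up}(W,\preccurlyeq)$ is the set of upsets. A DInFL-frame is a tuple $(W,I,\preccurlyeq,\circ,{}^\sim,{}^-)$ with $I\subseteq W$, $\preccurlyeq$ a partial order, $\circ:W\times W\to\mathcal P(W)$, ${}^\sim,{}^-:W\to W$, such that for all $u,v,x,y,z$: (F1) $x\preccurlyeq y$ iff $y\in I\circ x$ iff $y\in x\circ I$; (F2) $x\preccurlyeq y$, $x\in I$ imply $y\in I$; (F3) $x\preccurlyeq y$, $x\in u\circ v$ imply $y\in u\circ v$; (F4) $(x\circ y)\circ z=x\circ(y\circ z)$; (F5) $z^\sim\in x\circ y$ iff $y^-\in z\circ x$; (F6) $x^{\sim-}\preccurlyeq x$ and $x^{-\sim}\preccurlyeq x$. A DqRA-frame is a tuple $(W,I,\preccurlyeq,\circ,{}^\sim,{}^-,{}^\neg)$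 such that the first six components form a DInFL-frame and ${}^\neg:W\to W$ satisfies: (F7) $x^{\neg\neg}=x$; (F8) $x\preccurlyeq y$ implies $y^\neg\preccurlyeq x^\neg$; (F9) $z^-\in x\circ y$ iff $z^\neg\in y^{\sim\neg}\circ x^{\sim\neg}$. An InFL-algebra is $(A,\wedge,\vee,\cdot,1,\sim,-)$ with a lattice, a monoid, and $a\cdot b\leqslant c\iff a\leqslant -(b\cdot{\sim}c)\iff b\leqslant{\sim}(-c\cdot a)$; $a+b:=-({\sim}b\cdot{\sim}a)$. A quasi relation algebra is $(A,\wedge,\vee,\cdot,1,\sim,-,\neg)$ where the $\neg$-free reduct is an InFL-algebra, $\neg\neg a=a$, $\neg(a\wedge b)=\neg a\vee\neg b$, and $\neg(a\cdot b)=\neg a+\neg b$. A DqRA is a quasi relation algebra with distributive lattice reduct. *)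

theory Defs
  imports Main
begin

definition setcomp :: "('a \<Rightarrow> 'a \<Rightarrow> 'a set) \<Rightarrow> 'a set \<Rightarrow> 'a set \<Rightarrow> 'a set" where
  "setcomp c U V = (\<Union>a\<in>U. \<Union>b\<in>V. c a b)"

definition partial_order_on_set :: "'a set \<Rightarrow> ('a \<Rightarrow> 'a \<Rightarrow> bool) \<Rightarrow> bool" where
  "partial_order_on_set W le \<longleftrightarrow>
     (\<forall>x\<in>W. le x x) \<and>
     (\<forall>x\<in>W. \<forall>y\<in>W. \<forall>z\<in>W. le x y \<and> le y z \<longrightarrow> le x z) \<and>
     (\<forall>x\<in>W. \<forall>y\<in>W. le x y \<and> le y x \<longrightarrow> x = y)"

definition DInFL_frame ::
  "'a set \<Rightarrow> 'a set \<Rightarrow> ('a \<Rightarrow> 'a \<Rightarrow> bool) \<Rightarrow> ('a \<Rightarrow> 'a \<Rightarrow> 'a set)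
    \<Rightarrow> ('a \<Rightarrow> 'a) \<Rightarrow> ('a \<Rightarrow> 'a) \<Rightarrow> bool" where
  "DInFL_frame W I le c tld mn \<longleftrightarrow>
     I \<subseteq> W \<and> partial_order_on_set W le \<and>
     (\<forall>x\<in>W. \<forall>y\<in>W. c x y \<subseteq> W) \<and>
     (\<forall>x\<in>W. tld x \<in> W) \<and> (\<forall>x\<in>W. mn x \<in> W) \<and>
     \<comment> \<open>(F1)\<close>
     (\<forall>x\<in>W. \<forall>y\<in>W. (le x y \<longleftrightarrow> y \<in> setcomp c I {x}) \<and> (le x y \<longleftrightarrow> y \<in> setcomp c {x} I)) \<and>
     \<comment> \<open>(F2)\<close>
     (\<forall>x\<in>W. \<forall>y\<in>W. le x y \<and> x \<in> I \<longrightarrow> y \<in> I) \<and>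
     \<comment> \<open>(F3)\<close>
     (\<forall>u\<in>W. \<forall>v\<in>W. \<forall>x\<in>W. \<forall>y\<in>W. le x y \<and> x \<in> c u v \<longrightarrow> y \<in> c u v) \<and>
     \<comment> \<open>(F4)\<close>
     (\<forall>x\<in>W. \<forall>y\<in>W. \<forall>z\<in>W. setcomp c (c x y) {z} = setcomp c {x} (c y z)) \<and>
     \<comment> \<open>(F5)\<close>
     (\<forall>x\<in>W. \<forall>y\<in>W. \<forall>z\<in>W. tld z \<in> c x y \<longleftrightarrow> mn y \<in> c z x) \<and>
     \<comment> \<open>(F6)\<close>
     (\<forall>x\<in>W. le (mn (tld x)) x \<and> le (tld (mn x)) x)"

definition DqRA_frame ::
  "'a set \<Rightarrow> 'a set \<Rightarrow> ('a \<Rightarrow> 'a \<Rightarrow> bool) \<Rightarrow> ('a \<Rightarrow> 'a \<Rightarrow> 'a set)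
    \<Rightarrow> ('a \<Rightarrow> 'a) \<Rightarrow> ('a \<Rightarrow> 'a) \<Rightarrow> ('a \<Rightarrow> 'a) \<Rightarrow> bool" where
  "DqRA_frame W I le c tld mn ng \<longleftrightarrow>
     DInFL_frame W I le c tld mn \<and>
     (\<forall>x\<in>W. ng x \<in> W) \<and>
     \<comment> \<open>(F7)\<close>
     (\<forall>x\<in>W. ng (ng x) = x) \<and>
     \<comment> \<open>(F8)\<close>
     (\<forall>x\<in>W. \<forall>y\<in>W. le x y \<longrightarrow> le (ng y) (ng x)) \<and>
     \<comment> \<open>(F9)\<close>
     (\<forall>x\<in>W. \<forall>y\<in>W. \<forall>z\<in>W. mn z \<in> c x y \<longleftrightarrow> ng z \<in> c (ng (tld y)) (ng (tld x)))"

definition Up :: "'a set \<Rightarrow> ('a \<Rightarrow> 'a \<Rightarrow> bool) \<Rightarrow> 'a set set" where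
  "Up W le = {U. U \<subseteq> W \<and> (\<forall>x\<in>W. \<forall>y\<in>W. x \<in> U \<and> le x y \<longrightarrow> y \<in> U)}"

definition up_tilde :: "'a set \<Rightarrow> ('a \<Rightarrow> 'a) \<Rightarrow> 'a set \<Rightarrow> 'a set" where
  "up_tilde W mn U = {w\<in>W. mn w \<notin> U}"

definition up_minus :: "'a set \<Rightarrow> ('a \<Rightarrow> 'a) \<Rightarrow> 'a set \<Rightarrow> 'a set" where
  "up_minus W tld U = {w\<in>W. tld w \<notin> U}"

definition up_neg :: "'a set \<Rightarrow> ('a \<Rightarrow> 'a) \<Rightarrow> 'a set \<Rightarrow> 'a set" where
  "up_neg W ng U = {x\<in>W. ng x \<notin> U}"

definition lattice_on :: "'b set \<Rightarrow> ('b \<Rightarrow> 'b \<Rightarrow> 'b) \<Rightarrow> ('b \<Rightarrow> 'b \<Rightarrow> 'b) \<Rightarrow> bool" where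
  "lattice_on A mt jn \<longleftrightarrow>
     (\<forall>a\<in>A. \<forall>b\<in>A. mt a b \<in> A \<and> jn a b \<in> A) \<and>
     (\<forall>a\<in>A. \<forall>b\<in>A. mt a b = mt b a \<and> jn a b = jn b a) \<and>
     (\<forall>a\<in>A. \<forall>b\<in>A. \<forall>c\<in>A. mt (mt a b) c = mt a (mt b c) \<and> jn (jn a b) c = jn a (jn b c)) \<and>
     (\<forall>a\<in>A. \<forall>b\<in>A. mt a (jn a b) = a \<and> jn a (mt a b) = a)"

definition lat_le :: "('b \<Rightarrow> 'b \<Rightarrow> 'b) \<Rightarrow> 'b \<Rightarrow> 'b \<Rightarrow> bool" where
  "lat_le mt a b \<longleftrightarrow> mt a b = a"

definition monoid_on :: "'b set \<Rightarrow> ('b \<Rightarrow> 'b \<Rightarrow> 'b) \<Rightarrow> 'b \<Rightarrow> bool" where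
  "monoid_on A m e \<longleftrightarrow> e \<in> A \<and>
     (\<forall>a\<in>A. \<forall>b\<in>A. m a b \<in> A) \<and>
     (\<forall>a\<in>A. \<forall>b\<in>A. \<forall>c\<in>A. m (m a b) c = m a (m b c)) \<and>
     (\<forall>a\<in>A. m e a = a \<and> m a e = a)"

definition InFL_algebra ::
  "'b set \<Rightarrow> ('b \<Rightarrow> 'b \<Rightarrow> 'b) \<Rightarrow> ('b \<Rightarrow> 'b \<Rightarrow> 'b) \<Rightarrow> ('b \<Rightarrow> 'b \<Rightarrow> 'b) \<Rightarrow> 'b
    \<Rightarrow> ('b \<Rightarrow> 'b) \<Rightarrow> ('b \<Rightarrow> 'b) \<Rightarrow> bool" where
  "InFL_algebra A mt jn m e tld mn \<longleftrightarrow>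
     lattice_on A mt jn \<and> monoid_on A m e \<and>
     (\<forall>a\<in>A. tld a \<in> A \<and> mn a \<in> A) \<and>
     (\<forall>a\<in>A. \<forall>b\<in>A. \<forall>c\<in>A.
        (lat_le mt (m a b) c \<longleftrightarrow> lat_le mt a (mn (m b (tld c)))) \<and>
        (lat_le mt a (mn (m b (tld c))) \<longleftrightarrow> lat_le mt b (tld (m (mn c) a))))"

definition fis_plus :: "('b \<Rightarrow> 'b \<Rightarrow> 'b) \<Rightarrow> ('b \<Rightarrow> 'b) \<Rightarrow> ('b \<Rightarrow> 'b) \<Rightarrow> 'b \<Rightarrow> 'b \<Rightarrow> 'b" where
  "fis_plus m tld mn a b = mn (m (tld b) (tld a))"

definition qRA ::
  "'b set \<Rightarrow> ('b \<Rightarrow> 'b \<Rightarrow> 'b) \<Rightarrow> ('b \<Rightarrow> 'b \<Rightarrow> 'b) \<Rightarrow> ('b \<Rightarrow> 'b \<Rightarrow> 'b) \<Rightarrow> 'b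
    \<Rightarrow> ('b \<Rightarrow> 'b) \<Rightarrow> ('b \<Rightarrow> 'b) \<Rightarrow> ('b \<Rightarrow> 'b) \<Rightarrow> bool" where
  "qRA A mt jn m e tld mn ng \<longleftrightarrow>
     InFL_algebra A mt jn m e tld mn \<and>
     (\<forall>a\<in>A. ng a \<in> A) \<and>
     (\<forall>a\<in>A. ng (ng a) = a) \<and>
     (\<forall>a\<in>A. \<forall>b\<in>A. ng (mt a b) = jn (ng a) (ng b)) \<and>
     (\<forall>a\<in>A. \<forall>b\<in>A. ng (m a b) = fis_plus m tld mn (ng a) (ng b))"

definition DqRA ::
  "'b set \<Rightarrow> ('b \<Rightarrow> 'b \<Rightarrow> 'b) \<Rightarrow> ('b \<Rightarrow> 'b \<Rightarrow> 'b) \<Rightarrow> ('b \<Rightarrow> 'b \<Rightarrow> 'b) \<Rightarrow> 'b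
    \<Rightarrow> ('b \<Rightarrow> 'b) \<Rightarrow> ('b \<Rightarrow> 'b) \<Rightarrow> ('b \<Rightarrow> 'b) \<Rightarrow> bool" where
  "DqRA A mt jn m e tld mn ng \<longleftrightarrow>
     qRA A mt jn m e tld mn ng \<and>
     (\<forall>a\<in>A. \<forall>b\<in>A. \<forall>c\<in>A. mt a (jn b c) = jn (mt a b) (mt a c))"

end

theory Submission
  imports Defs
begin

(*
  The frame conditions make x |-> x~ and x |-> x- mutually inverse, order-reversing
  bijections of W, and (F5) says that the ternary relation z : x o y is invariant under the
  rotation (x, y, z) |-> (z-, x, y-). Consequently the lifted product of upsets is residuated:
  u lies in -(V o ~X) iff {u} o V <= X, and v lies in ~(-X o U) iff U o {v} <= X.
  Iterating the rotation turns z~ : x o y into z- : x-- o y--, and combined with (F9) this is the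
  De Morgan law  neg (U o V) = neg U + neg V.
*)

lemma mem_setcomp_iff: "y \<in> setcomp c U V \<longleftrightarrow> (\<exists>a\<in>U. \<exists>b\<in>V. y \<in> c a b)"
  by (auto simp: setcomp_def)

lemma setcomp_subset_iff_left: "setcomp c U V \<subseteq> X \<longleftrightarrow> (\<forall>u\<in>U. setcomp c {u} V \<subseteq> X)"
  and setcomp_subset_iff_right: "setcomp c U V \<subseteq> X \<longleftrightarrow> (\<forall>v\<in>V. setcomp c U {v} \<subseteq> X)"
  by (auto simp: subset_iff mem_setcomp_iff)

lemma lat_le_Int_iff_subset: "lat_le (\<inter>) X Y \<longleftrightarrow> X \<subseteq> Y"
  by (auto simp: lat_le_def)

lemma Up_subset: "U \<in> Up W le \<Longrightarrow> U \<subseteq> W"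
  by (simp add: Up_def)

lemma Up_upward: "U \<in> Up W le \<Longrightarrow> x \<in> U \<Longrightarrow> y \<in> W \<Longrightarrow> le x y \<Longrightarrow> y \<in> U"
  by (auto simp: Up_def)

lemma UpI: "U \<subseteq> W \<Longrightarrow> (\<And>x y. x \<in> U \<Longrightarrow> y \<in> W \<Longrightarrow> le x y \<Longrightarrow> y \<in> U) \<Longrightarrow> U \<in> Up W le"
  by (auto simp: Up_def)

lemma antitone_preimage_compl_Up:
  assumes "U \<in> Up W le"
    and "\<And>x. x \<in> W \<Longrightarrow> f x \<in> W"
    and "\<And>x y. x \<in> W \<Longrightarrow> y \<in> W \<Longrightarrow> le x y \<Longrightarrow> le (f y) (f x)"
  shows "{w \<in> W. f w \<notin> U} \<in> Up W le"
proof (rule UpI)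
  fix x y
  assume "x \<in> {w \<in> W. f w \<notin> U}" "y \<in> W" "le x y"
  then show "y \<in> {w \<in> W. f w \<notin> U}"
    using assms Up_upward[of U W le "f y" "f x"] by blast
qed blast

lemma lattice_on_Up: "lattice_on (Up W le) (\<inter>) (\<union>)"
  unfolding lattice_on_def Up_def by blast

lemma up_neg_Int: "up_neg W ng (U \<inter> V) = up_neg W ng U \<union> up_neg W ng V"
  by (auto simp: up_neg_def)

text \<open>Conditions (F1)--(F6) in pointwise form.\<close>

locale dinfl_frame =
  fixes W I :: "'a set" and le :: "'a \<Rightarrow> 'a \<Rightarrow> bool" and c :: "'a \<Rightarrow> 'a \<Rightarrow> 'a set"
    and tld mn :: "'a \<Rightarrow> 'a"
  assumes unit_subset: "I \<subseteq> W"
    and le_reflexive: "x \<in> W \<Longrightarrow> le x x"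
    and le_antisymmetric: "x \<in> W \<Longrightarrow> y \<in> W \<Longrightarrow> le x y \<Longrightarrow> le y x \<Longrightarrow> x = y"
    and comp_subset: "x \<in> W \<Longrightarrow> y \<in> W \<Longrightarrow> c x y \<subseteq> W"
    and tld_closed: "x \<in> W \<Longrightarrow> tld x \<in> W"
    and mn_closed: "x \<in> W \<Longrightarrow> mn x \<in> W"
    and le_iff_unit_left: "x \<in> W \<Longrightarrow> y \<in> W \<Longrightarrow> le x y \<longleftrightarrow> (\<exists>i\<in>I. y \<in> c i x)"
    and le_iff_unit_right: "x \<in> W \<Longrightarrow> y \<in> W \<Longrightarrow> le x y \<longleftrightarrow> (\<exists>i\<in>I. y \<in> c x i)"
    and unit_upward: "x \<in> W \<Longrightarrow> y \<in> W \<Longrightarrow> le x y \<Longrightarrow> x \<in> I \<Longrightarrow> y \<in> I"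
    and comp_upward:
      "u \<in> W \<Longrightarrow> v \<in> W \<Longrightarrow> x \<in> W \<Longrightarrow> y \<in> W \<Longrightarrow> le x y \<Longrightarrow> x \<in> c u v \<Longrightarrow> y \<in> c u v"
    and comp_assoc: "x \<in> W \<Longrightarrow> y \<in> W \<Longrightarrow> z \<in> W \<Longrightarrow>
      (\<exists>u\<in>c x y. w \<in> c u z) \<longleftrightarrow> (\<exists>v\<in>c y z. w \<in> c x v)"
    and tld_comp_iff: "x \<in> W \<Longrightarrow> y \<in> W \<Longrightarrow> z \<in> W \<Longrightarrow> tld z \<in> c x y \<longleftrightarrow> mn y \<in> c z x"
    and mn_tld_le: "x \<in> W \<Longrightarrow> le (mn (tld x)) x"
    and tld_mn_le: "x \<in> W \<Longrightarrow> le (tld (mn x)) x"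

lemma DInFL_frame_imp_dinfl_frame:
  assumes "DInFL_frame W I le c tld mn"
  shows "dinfl_frame W I le c tld mn"
proof -
  from assms obtain
        "I \<subseteq> W"
    and po: "partial_order_on_set W le"
    and closed: "\<forall>x\<in>W. \<forall>y\<in>W. c x y \<subseteq> W" "\<forall>x\<in>W. tld x \<in> W" "\<forall>x\<in>W. mn x \<in> W"
    and F1: "\<forall>x\<in>W. \<forall>y\<in>W.
      (le x y \<longleftrightarrow> y \<in> setcomp c I {x}) \<and> (le x y \<longleftrightarrow> y \<in> setcomp c {x} I)"
    and F2: "\<forall>x\<in>W. \<forall>y\<in>W. le x y \<and> x \<in> I \<longrightarrow> y \<in> I"
    and F3: "\<forall>u\<in>W. \<forall>v\<in>W. \<forall>x\<in>W. \<forall>y\<in>W. le x y \<and> x \<in> c u v \<longrightarrow> y \<in> c u v"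
    and F4: "\<forall>x\<in>W. \<forall>y\<in>W. \<forall>z\<in>W. setcomp c (c x y) {z} = setcomp c {x} (c y z)"
    and F5: "\<forall>x\<in>W. \<forall>y\<in>W. \<forall>z\<in>W. tld z \<in> c x y \<longleftrightarrow> mn y \<in> c z x"
    and F6: "\<forall>x\<in>W. le (mn (tld x)) x \<and> le (tld (mn x)) x"
    unfolding DInFL_frame_def by (elim conjE) (rule that)
  show ?thesis
  proof
    show "I \<subseteq> W" by fact
    show "le x x" if "x \<in> W" for x
      using po that unfolding partial_order_on_set_def by blast
    show "x = y" if "x \<in> W" "y \<in> W" "le x y" "le y x" for x y
      using po that unfolding partial_order_on_set_def by blast
    show "c x y \<subseteq> W" if "x \<in> W" "y \<in> W" for x y
      using closed(1) that by blast
    show "tld x \<in> W" "mn x \<in> W" if "x \<in> W" for x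
      using closed(2,3) that by blast+
    show "le x y \<longleftrightarrow> (\<exists>i\<in>I. y \<in> c i x)" "le x y \<longleftrightarrow> (\<exists>i\<in>I. y \<in> c x i)"
      if "x \<in> W" "y \<in> W" for x y
      using F1 that unfolding mem_setcomp_iff by blast+
    show "y \<in> I" if "x \<in> W" "y \<in> W" "le x y" "x \<in> I" for x y
      using F2 that by blast
    show "y \<in> c u v" if "u \<in> W" "v \<in> W" "x \<in> W" "y \<in> W" "le x y" "x \<in> c u v" for u v x y
      using F3 that by blast
    show "(\<exists>u\<in>c x y. w \<in> c u z) \<longleftrightarrow> (\<exists>v\<in>c y z. w \<in> c x v)"
      if "x \<in> W" "y \<in> W" "z \<in> W" for x y z w
    proof -
      have "w \<in> setcomp c (c x y) {z} \<longleftrightarrow> w \<in> setcomp c {x} (c y z)"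
        using F4 that by simp
      then show ?thesis by (simp add: mem_setcomp_iff)
    qed
    show "tld z \<in> c x y \<longleftrightarrow> mn y \<in> c z x" if "x \<in> W" "y \<in> W" "z \<in> W" for x y z
      using F5 that by blast
    show "le (mn (tld x)) x" "le (tld (mn x)) x" if "x \<in> W" for x
      using F6 that by blast+
  qed
qed

context dinfl_frame
begin

lemma mn_tld:
  assumes x: "x \<in> W"
  shows "mn (tld x) = x"
proof -
  from x have tx: "tld x \<in> W" by (rule tld_closed)
  then obtain i where i: "i \<in> I" "tld x \<in> c i (tld x)"
    using le_iff_unit_left le_reflexive by blast
  then have "mn (tld x) \<in> c x i"
    using tld_comp_iff[of i "tld x" x] unit_subset tx x by blast
  then have "le x (mn (tld x))"
    using le_iff_unit_right[of x "mn (tld x)"] i(1) x tx mn_closed by blast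
  then show ?thesis
    using mn_tld_le le_antisymmetric x tx mn_closed by blast
qed

lemma tld_mn:
  assumes x: "x \<in> W"
  shows "tld (mn x) = x"
proof -
  from x have mx: "mn x \<in> W" by (rule mn_closed)
  then obtain i where i: "i \<in> I" "mn x \<in> c (mn x) i"
    using le_iff_unit_right le_reflexive by blast
  then have "tld (mn x) \<in> c i x"
    using tld_comp_iff[of i x "mn x"] unit_subset mx x by blast
  then have "le x (tld (mn x))"
    using le_iff_unit_left[of x "tld (mn x)"] i(1) x mx tld_closed by blast
  then show ?thesis
    using tld_mn_le le_antisymmetric x mx tld_closed by blast
qed

lemma comp_rotate: "x \<in> W \<Longrightarrow> y \<in> W \<Longrightarrow> z \<in> W \<Longrightarrow> z \<in> c x y \<longleftrightarrow> mn y \<in> c (mn z) x"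
  using tld_comp_iff[of x y "mn z"] by (simp add: mn_closed tld_mn)

lemma tld_comp_iff_mn_comp:
  assumes "x \<in> W" "y \<in> W" "z \<in> W"
  shows "tld z \<in> c x y \<longleftrightarrow> mn z \<in> c (mn (mn x)) (mn (mn y))"
proof -
  have "tld z \<in> c x y \<longleftrightarrow> mn y \<in> c z x"
    using assms by (rule tld_comp_iff)
  also have "\<dots> \<longleftrightarrow> mn x \<in> c (mn (mn y)) z"
    using assms by (simp add: comp_rotate mn_closed)
  also have "\<dots> \<longleftrightarrow> mn z \<in> c (mn (mn x)) (mn (mn y))"
    using assms by (simp add: comp_rotate mn_closed)
  finally show ?thesis .
qed

lemma mn_antitone:
  assumes "x \<in> W" "y \<in> W" "le x y"
  shows "le (mn y) (mn x)"
proof -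
  obtain i where "i \<in> I" "y \<in> c i x"
    using assms le_iff_unit_left by blast
  moreover from this have "mn x \<in> c (mn y) i"
    using comp_rotate assms unit_subset by blast
  ultimately show ?thesis
    using le_iff_unit_right assms mn_closed by blast
qed

lemma tld_antitone:
  assumes "x \<in> W" "y \<in> W" "le x y"
  shows "le (tld y) (tld x)"
proof -
  obtain i where "i \<in> I" "y \<in> c x i"
    using assms le_iff_unit_right by blast
  moreover from this have "tld x \<in> c i (tld y)"
    using tld_comp_iff[of i "tld y" x] assms unit_subset tld_closed mn_tld by auto
  ultimately show ?thesis
    using le_iff_unit_left assms tld_closed by blast
qed

lemma up_tilde_Up:
  assumes "U \<in> Up W le"
  shows "up_tilde W mn U \<in> Up W le"
  unfolding up_tilde_def using assms mn_closed mn_antitone by (rule antitone_preimage_compl_Up)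

lemma up_minus_Up:
  assumes "U \<in> Up W le"
  shows "up_minus W tld U \<in> Up W le"
  unfolding up_minus_def using assms tld_closed tld_antitone by (rule antitone_preimage_compl_Up)

lemma unit_Up: "I \<in> Up W le"
  using unit_subset unit_upward by (blast intro: UpI)

lemma setcomp_subset: "U \<subseteq> W \<Longrightarrow> V \<subseteq> W \<Longrightarrow> setcomp c U V \<subseteq> W"
  using comp_subset unfolding setcomp_def by blast

lemma setcomp_Up:
  assumes U: "U \<in> Up W le" and V: "V \<in> Up W le"
  shows "setcomp c U V \<in> Up W le"
proof (rule UpI)
  show "setcomp c U V \<subseteq> W"
    using U V by (intro setcomp_subset Up_subset)
next
  fix x y
  assume "x \<in> setcomp c U V" "y \<in> W" "le x y"
  moreover from this obtain u v where "u \<in> U" "v \<in> V" "x \<in> c u v"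
    unfolding mem_setcomp_iff by blast
  moreover have "u \<in> W" "v \<in> W"
    using Up_subset U V \<open>u \<in> U\<close> \<open>v \<in> V\<close> by blast+
  ultimately show "y \<in> setcomp c U V"
    unfolding mem_setcomp_iff using comp_upward comp_subset by blast
qed

lemma setcomp_assoc:
  assumes "U \<subseteq> W" "V \<subseteq> W" "X \<subseteq> W"
  shows "setcomp c (setcomp c U V) X = setcomp c U (setcomp c V X)"
proof (rule set_eqI)
  fix w
  have "w \<in> setcomp c (setcomp c U V) X \<longleftrightarrow> (\<exists>x\<in>U. \<exists>y\<in>V. \<exists>z\<in>X. \<exists>u\<in>c x y. w \<in> c u z)"
    unfolding Bex_def mem_setcomp_iff by blast
  also have "\<dots> \<longleftrightarrow> (\<exists>x\<in>U. \<exists>y\<in>V. \<exists>z\<in>X. \<exists>v\<in>c y z. w \<in> c x v)"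
    using assms comp_assoc by (meson subsetD)
  also have "\<dots> \<longleftrightarrow> w \<in> setcomp c U (setcomp c V X)"
    unfolding Bex_def mem_setcomp_iff by blast
  finally show "w \<in> setcomp c (setcomp c U V) X \<longleftrightarrow> w \<in> setcomp c U (setcomp c V X)" .
qed

lemma setcomp_unit_left:
  assumes U: "U \<in> Up W le"
  shows "setcomp c I U = U"
proof (rule set_eqI)
  fix y
  have "y \<in> setcomp c I U \<longleftrightarrow> (\<exists>x\<in>U. y \<in> W \<and> le x y)"
    using le_iff_unit_left Up_subset[OF U] unit_subset comp_subset
    unfolding mem_setcomp_iff by blast
  also have "\<dots> \<longleftrightarrow> y \<in> U"
    using le_reflexive Up_subset[OF U] Up_upward[OF U] by blast
  finally show "y \<in> setcomp c I U \<longleftrightarrow> y \<in> U" .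
qed

lemma setcomp_unit_right:
  assumes U: "U \<in> Up W le"
  shows "setcomp c U I = U"
proof (rule set_eqI)
  fix y
  have "y \<in> setcomp c U I \<longleftrightarrow> (\<exists>x\<in>U. y \<in> W \<and> le x y)"
    using le_iff_unit_right Up_subset[OF U] unit_subset comp_subset
    unfolding mem_setcomp_iff by blast
  also have "\<dots> \<longleftrightarrow> y \<in> U"
    using le_reflexive Up_subset[OF U] Up_upward[OF U] by blast
  finally show "y \<in> setcomp c U I \<longleftrightarrow> y \<in> U" .
qed

lemma monoid_on_Up: "monoid_on (Up W le) (setcomp c) I"
  unfolding monoid_on_def
  by (simp add: unit_Up setcomp_Up setcomp_assoc Up_subset setcomp_unit_left setcomp_unit_right)

lemma mem_up_minus_setcomp_up_tilde_iff:
  assumes V: "V \<subseteq> W"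
  shows "u \<in> up_minus W tld (setcomp c V (up_tilde W mn X)) \<longleftrightarrow> u \<in> W \<and> setcomp c {u} V \<subseteq> X"
proof (cases "u \<in> W")
  case u: True
  have "tld u \<in> setcomp c V (up_tilde W mn X) \<longleftrightarrow> (\<exists>v\<in>V. \<exists>w\<in>W. mn w \<notin> X \<and> mn w \<in> c u v)"
    using tld_comp_iff[of _ _ u] u V unfolding mem_setcomp_iff up_tilde_def by blast
  also have "\<dots> \<longleftrightarrow> (\<exists>v\<in>V. \<exists>y\<in>c u v. y \<notin> X)"
    using mn_closed tld_closed mn_tld comp_subset u V by (metis subsetD)
  finally show ?thesis
    using u unfolding up_minus_def subset_iff mem_setcomp_iff by blast
qed (simp add: up_minus_def)

lemma mem_up_tilde_setcomp_up_minus_iff: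
  assumes U: "U \<subseteq> W"
  shows "v \<in> up_tilde W mn (setcomp c (up_minus W tld X) U) \<longleftrightarrow> v \<in> W \<and> setcomp c U {v} \<subseteq> X"
proof (cases "v \<in> W")
  case v: True
  have "mn v \<in> setcomp c (up_minus W tld X) U \<longleftrightarrow> (\<exists>u\<in>U. \<exists>w\<in>W. tld w \<notin> X \<and> tld w \<in> c u v)"
    using tld_comp_iff[of _ v] v U unfolding mem_setcomp_iff up_minus_def by blast
  also have "\<dots> \<longleftrightarrow> (\<exists>u\<in>U. \<exists>y\<in>c u v. y \<notin> X)"
    using mn_closed tld_closed tld_mn comp_subset v U by (metis subsetD)
  finally show ?thesis
    using v unfolding up_tilde_def subset_iff mem_setcomp_iff by blast
qed (simp add: up_tilde_def)

lemma setcomp_subset_iff_subset_up_minus: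
  assumes "U \<subseteq> W" "V \<subseteq> W"
  shows "setcomp c U V \<subseteq> X \<longleftrightarrow> U \<subseteq> up_minus W tld (setcomp c V (up_tilde W mn X))"
  unfolding setcomp_subset_iff_left[of c U V X] subset_eq[of U]
  using assms by (auto simp: mem_up_minus_setcomp_up_tilde_iff)

lemma setcomp_subset_iff_subset_up_tilde:
  assumes "U \<subseteq> W" "V \<subseteq> W"
  shows "setcomp c U V \<subseteq> X \<longleftrightarrow> V \<subseteq> up_tilde W mn (setcomp c (up_minus W tld X) U)"
  unfolding setcomp_subset_iff_right[of c U V X] subset_eq[of V]
  using assms by (auto simp: mem_up_tilde_setcomp_up_minus_iff)

theorem InFL_algebra_Up:
  "InFL_algebra (Up W le) (\<inter>) (\<union>) (setcomp c) I (up_tilde W mn) (up_minus W tld)"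
  unfolding InFL_algebra_def lat_le_Int_iff_subset
proof (intro conjI ballI lattice_on_Up monoid_on_Up up_tilde_Up up_minus_Up)
  fix U V X
  assume "U \<in> Up W le" "V \<in> Up W le"
  then have UV: "U \<subseteq> W" "V \<subseteq> W"
    by (simp_all add: Up_subset)
  show "setcomp c U V \<subseteq> X \<longleftrightarrow> U \<subseteq> up_minus W tld (setcomp c V (up_tilde W mn X))"
    using UV by (rule setcomp_subset_iff_subset_up_minus)
  show "U \<subseteq> up_minus W tld (setcomp c V (up_tilde W mn X))
      \<longleftrightarrow> V \<subseteq> up_tilde W mn (setcomp c (up_minus W tld X) U)"
    unfolding setcomp_subset_iff_subset_up_minus[OF UV, symmetric]
    using UV by (rule setcomp_subset_iff_subset_up_tilde)
qed

end

locale dqra_frame = dinfl_frame +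
  fixes ng :: "'a \<Rightarrow> 'a"
  assumes ng_closed: "x \<in> W \<Longrightarrow> ng x \<in> W"
    and ng_ng: "x \<in> W \<Longrightarrow> ng (ng x) = x"
    and ng_antitone: "x \<in> W \<Longrightarrow> y \<in> W \<Longrightarrow> le x y \<Longrightarrow> le (ng y) (ng x)"
    and mn_comp_iff:
      "x \<in> W \<Longrightarrow> y \<in> W \<Longrightarrow> z \<in> W \<Longrightarrow> mn z \<in> c x y \<longleftrightarrow> ng z \<in> c (ng (tld y)) (ng (tld x))"

lemma DqRA_frame_imp_dqra_frame:
  assumes "DqRA_frame W I le c tld mn ng"
  shows "dqra_frame W I le c tld mn ng"
proof -
  from assms obtain
        frame: "DInFL_frame W I le c tld mn"
    and closed: "\<forall>x\<in>W. ng x \<in> W"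
    and F7: "\<forall>x\<in>W. ng (ng x) = x"
    and F8: "\<forall>x\<in>W. \<forall>y\<in>W. le x y \<longrightarrow> le (ng y) (ng x)"
    and F9: "\<forall>x\<in>W. \<forall>y\<in>W. \<forall>z\<in>W. mn z \<in> c x y \<longleftrightarrow> ng z \<in> c (ng (tld y)) (ng (tld x))"
    unfolding DqRA_frame_def by (elim conjE) (rule that)
  show ?thesis
  proof (intro dqra_frame.intro dqra_frame_axioms.intro)
    show "dinfl_frame W I le c tld mn"
      using frame by (rule DInFL_frame_imp_dinfl_frame)
    show "ng x \<in> W" "ng (ng x) = x" if "x \<in> W" for x
      using closed F7 that by blast+
    show "le (ng y) (ng x)" if "x \<in> W" "y \<in> W" "le x y" for x y
      using F8 that by blast
    show "mn z \<in> c x y \<longleftrightarrow> ng z \<in> c (ng (tld y)) (ng (tld x))" if "x \<in> W" "y \<in> W" "z \<in> W" for x y z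
      using F9 that by blast
  qed
qed

context dqra_frame
begin

lemma tld_comp_iff_ng_comp:
  assumes "x \<in> W" "y \<in> W" "z \<in> W"
  shows "tld z \<in> c x y \<longleftrightarrow> ng z \<in> c (ng (mn y)) (ng (mn x))"
  using assms tld_comp_iff_mn_comp mn_comp_iff[of "mn (mn x)" "mn (mn y)" z]
  by (simp add: mn_closed tld_mn)

lemma up_neg_Up:
  assumes "U \<in> Up W le"
  shows "up_neg W ng U \<in> Up W le"
  unfolding up_neg_def using assms ng_closed ng_antitone by (rule antitone_preimage_compl_Up)

lemma up_neg_up_neg: "U \<subseteq> W \<Longrightarrow> up_neg W ng (up_neg W ng U) = U"
  using ng_closed ng_ng by (auto simp: up_neg_def)

lemma ng_mem_setcomp_iff:
  assumes "U \<subseteq> W" "V \<subseteq> W" "w \<in> W"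
  shows "ng w \<in> setcomp c U V \<longleftrightarrow>
    tld w \<in> setcomp c (up_tilde W mn (up_neg W ng V)) (up_tilde W mn (up_neg W ng U))"
proof
  assume "ng w \<in> setcomp c U V"
  then obtain u v where uv: "u \<in> U" "v \<in> V" "ng w \<in> c u v"
    unfolding mem_setcomp_iff by blast
  then have "u \<in> W" "v \<in> W"
    using assms by blast+
  define a b where "a = tld (ng v)" and "b = tld (ng u)"
  have ab: "a \<in> W" "b \<in> W" "ng (mn a) = v" "ng (mn b) = u"
    unfolding a_def b_def using \<open>u \<in> W\<close> \<open>v \<in> W\<close> by (simp_all add: tld_closed ng_closed mn_tld ng_ng)
  then have "tld w \<in> c a b"
    using tld_comp_iff_ng_comp assms(3) uv(3) by blast
  moreover have "a \<in> up_tilde W mn (up_neg W ng V)" "b \<in> up_tilde W mn (up_neg W ng U)"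
    using ab uv by (auto simp: up_tilde_def up_neg_def mn_closed)
  ultimately show "tld w \<in> setcomp c (up_tilde W mn (up_neg W ng V)) (up_tilde W mn (up_neg W ng U))"
    unfolding mem_setcomp_iff by blast
next
  assume "tld w \<in> setcomp c (up_tilde W mn (up_neg W ng V)) (up_tilde W mn (up_neg W ng U))"
  then obtain a b where "a \<in> W" "b \<in> W" "ng (mn a) \<in> V" "ng (mn b) \<in> U" "tld w \<in> c a b"
    unfolding mem_setcomp_iff up_tilde_def up_neg_def using mn_closed by blast
  then show "ng w \<in> setcomp c U V"
    using tld_comp_iff_ng_comp assms(3) unfolding mem_setcomp_iff by blast
qed

lemma up_neg_setcomp:
  assumes "U \<subseteq> W" "V \<subseteq> W"
  shows "up_neg W ng (setcomp c U V)
    = fis_plus (setcomp c) (up_tilde W mn) (up_minus W tld) (up_neg W ng U) (up_neg W ng V)"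
  unfolding fis_plus_def up_minus_def up_neg_def[of W ng "setcomp c U V"]
  using ng_mem_setcomp_iff[OF assms] by blast

theorem DqRA_Up:
  "DqRA (Up W le) (\<inter>) (\<union>) (setcomp c) I (up_tilde W mn) (up_minus W tld) (up_neg W ng)"
  unfolding DqRA_def qRA_def
proof (intro conjI ballI InFL_algebra_Up up_neg_Up up_neg_Int)
  fix U V X
  assume "U \<in> Up W le" "V \<in> Up W le"
  then have UV: "U \<subseteq> W" "V \<subseteq> W"
    by (simp_all add: Up_subset)
  show "up_neg W ng (up_neg W ng U) = U"
    using UV(1) by (rule up_neg_up_neg)
  show "up_neg W ng (setcomp c U V)
    = fis_plus (setcomp c) (up_tilde W mn) (up_minus W tld) (up_neg W ng U) (up_neg W ng V)"
    using UV by (rule up_neg_setcomp)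
  show "U \<inter> (V \<union> X) = U \<inter> V \<union> U \<inter> X"
    by blast
qed

end

theorem mainTheorem9:
  fixes W I :: "'a set" and le :: "'a \<Rightarrow> 'a \<Rightarrow> bool" and c :: "'a \<Rightarrow> 'a \<Rightarrow> 'a set"
    and tld mn ng :: "'a \<Rightarrow> 'a"
  assumes "DqRA_frame W I le c tld mn ng"
  shows "DqRA (Up W le) (\<inter>) (\<union>) (setcomp c) I
           (up_tilde W mn) (up_minus W tld) (up_neg W ng)"
proof -
  interpret dqra_frame W I le c tld mn ng
    using assms by (rule DqRA_frame_imp_dqra_frame)
  show ?thesis by (rule DqRA_Up)
qed

end
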